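(* Let $c$ be a positive integer and $\zeta_c\in\mathbb{C}$ a primitive $c$-th root of unity. For $i,j\in\mathbb{Z}/c\mathbb{Z}$ let $\Theta_c^{i,j}\in\mathbb{Z}[T]$ be the minimal polynomial of $\zeta_c^i+\zeta_c^{-i}+\zeta_c^j+\zeta_c^{-j}$ and $\Delta_c^{i,j}\in\mathbb{Z}[T]$ the minimal polynomial of $\zeta_c^{i+j}+\zeta_c^{i-j}+\zeta_c^{-i+j}+\zeta_c^{-i-j}+2$, and set $\Theta_c=\mathrm{lcm}\{\Theta_c^{i,j}: i,j\in\mathbb{Z}/c\mathbb{Z}\}$, $\Delta_c=\mathrm{lcm}\{\Delta_c^{i,j}: i,j\in\mathbb{Z}/c\mathbb{Z}\}$. Then for every field $\mathbb{F}$ and every $g\in\mathrm{Sp}_4(\mathbb{F})$ of order dividing $c$, we have $\Theta_c(\chi_3(g))=0$ and $\Delta_c(\chi_2(g))=0$ in $\mathbb{F}$.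
   Context: For $M\in\mathrm{M}_4(\mathbb{F})$ write its characteristic polynomial as $T^4-\chi_3(M)T^3+\chi_2(M)T^2-\chi_1(M)T+\chi_0(M)$ (so $\chi_3(M)=\mathrm{tr}(M)$). Polynomials in $\mathbb{Z}[T]$ are evaluated in $\mathbb{F}$ via the canonical map $\mathbb{Z}\to\mathbb{F}$. *)

theory Defs
  imports Complex_Main "HOL-Computational_Algebra.Polynomial_Factorial"
    "Jordan_Normal_Form.Char_Poly"
begin

text \<open>Minimal polynomial in Z[T] of an algebraic integer x: the monic integer
polynomial of least degree vanishing at x (unique, and it is the minimal
polynomial over Q).\<close>
definition min_int_poly :: "complex \<Rightarrow> int poly" where
  "min_int_poly x = (THE p. lead_coeff p = 1 \<and> poly (map_poly of_int p) x = 0 \<and>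
      (\<forall>q :: int poly. q \<noteq> 0 \<longrightarrow> poly (map_poly of_int q) x = 0 \<longrightarrow> degree p \<le> degree q))"

definition primitive_root :: "nat \<Rightarrow> complex \<Rightarrow> bool" where
  "primitive_root c z \<longleftrightarrow> z ^ c = 1 \<and> (\<forall>k\<in>{1..<c}. z ^ k \<noteq> 1)"

definition Theta :: "nat \<Rightarrow> complex \<Rightarrow> int poly" where
  "Theta c z = Lcm ((\<lambda>(i,j). min_int_poly (z^i + inverse (z^i) + z^j + inverse (z^j)))
                    ` ({0..<c} \<times> {0..<c}))"

definition Delta :: "nat \<Rightarrow> complex \<Rightarrow> int poly" where
  "Delta c z = Lcm ((\<lambda>(i,j). min_int_poly (z^(i+j) + z^i * inverse (z^j)
                        + inverse (z^i) * z^j + inverse (z^(i+j)) + 2))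
                    ` ({0..<c} \<times> {0..<c}))"

text \<open>Standard symplectic form J = [[0, I_2], [-I_2, 0]].\<close>
definition J4 :: "'a :: comm_ring_1 mat" where
  "J4 = mat 4 4 (\<lambda>(i,j). if i < 2 \<and> j = i + 2 then 1 else if j < 2 \<and> i = j + 2 then -1 else 0)"

definition Sp4 :: "'a :: comm_ring_1 mat set" where
  "Sp4 = {g \<in> carrier_mat 4 4. transpose_mat g * J4 * g = J4}"

text \<open>char_poly M = T^4 - chi 3 M T^3 + chi 2 M T^2 - chi 1 M T + chi 0 M.\<close>
definition chi :: "nat \<Rightarrow> 'a :: comm_ring_1 mat \<Rightarrow> 'a" where
  "chi k M = (-1) ^ (4 - k) * coeff (char_poly M) k"

end

(*
  Over an algebraic closure K of F, the characteristic polynomial of g \<in> Sp4 is palindromic: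
  g^-1 = -J g^T J is similar to g^T, and det g = 1 because the Pfaffian of g^T J g is -det g.
  So its roots are l, 1/l, m, 1/m with chi 3 g = l + 1/l + m + 1/m and
  chi 2 g = (l + 1/l)(m + 1/m) + 2, and l^c = m^c = 1 because g^c = 1.

  It remains to show that Theta_c vanishes at l + 1/l + m + 1/m for arbitrary c-th roots of
  unity l, m in any field, also when the characteristic divides c (likewise for Delta_c).
  Writing inverses as (c-1)-st powers, this value is P(l, m) for the integer polynomial
  P = Theta_c(Y + Y^(c-1) + W + W^(c-1)).  P vanishes at every pair of complex c-th roots of
  unity, since each value z^i + z^-i + z^j + z^-j is an algebraic integer (an eigenvalue of an
  integer matrix) whose minimal polynomial divides Theta_c.  As X^c - 1 has c distinct complex
  roots, reducing P modulo W^c - 1 and then its coefficients modulo Y^c - 1 leaves zero, so P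
  lies in the ideal (Y^c - 1, W^c - 1) and P(l, m) = 0.
*)

theory Submission
  imports Defs "HOL-Algebra.Algebraic_Closure_Type"
begin

hide_const (open) Polynomials.degree Polynomials.lead_coeff up_ring.coeff up_ring.monom module.smult

section \<open>Algebraic integers and their minimal polynomials\<close>

definition algebraic_int :: "complex \<Rightarrow> bool" where
  "algebraic_int x \<longleftrightarrow> (\<exists>p. lead_coeff p = 1 \<and> poly (of_int_poly p) x = 0)"

lemma primitive_least_degree_root_dvd:
  fixes m p :: "int poly" and x :: complex
  assumes "content m = 1" and m_root: "poly (of_int_poly m) x = 0" and p_root: "poly (of_int_poly p) x = 0"
    and least: "\<And>q. q \<noteq> 0 \<Longrightarrow> poly (of_int_poly q) x = 0 \<Longrightarrow> degree m \<le> degree q"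
  shows "m dvd p"
proof -
  have "m \<noteq> 0" using \<open>content m = 1\<close> by auto
  obtain q r where qr: "pseudo_divmod p m = (q, r)" by fastforce
  define a where "a = lead_coeff m ^ (Suc (degree p) - degree m)"
  have div: "smult a p = m * q + r" and r_deg: "r = 0 \<or> degree r < degree m"
    using pseudo_divmod[OF \<open>m \<noteq> 0\<close> qr] unfolding a_def by auto
  have "poly (of_int_poly (smult a p)) x = poly (of_int_poly (m * q + r)) x"
    by (simp only: div)
  then have "poly (of_int_poly r) x = 0"
    by (simp add: of_int_hom.map_poly_hom_smult of_int_poly_hom.hom_add of_int_poly_hom.hom_mult m_root p_root)
  have "r = 0"
  proof (rule ccontr)
    assume "r \<noteq> 0"
    with least \<open>poly (of_int_poly r) x = 0\<close> have "degree m \<le> degree r" by blast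
    with r_deg \<open>r \<noteq> 0\<close> show False by simp
  qed
  then have "m dvd primitive_part (smult a p)"
    using div primitive_part_dvd_primitive_partI[of m "smult a p"] \<open>content m = 1\<close>
    by (simp add: primitive_part_prim)
  moreover have "a \<noteq> 0" unfolding a_def using \<open>m \<noteq> 0\<close> by simp
  ultimately have "m dvd [:unit_factor a:] * primitive_part p"
    by (simp add: primitive_part_smult)
  then have "m dvd primitive_part p"
    using \<open>a \<noteq> 0\<close> by (subst (asm) dvd_mult_unit_iff') (simp_all add: is_unit_const_poly_iff)
  also have "primitive_part p dvd p"
    by (metis content_times_primitive_part dvd_smult dvd_refl)
  finally show ?thesis .
qed

lemma algebraic_int_least_degree_monic_root:
  assumes "algebraic_int x"
  obtains p where "lead_coeff p = 1" "poly (of_int_poly p) x = 0"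
    "\<And>q. q \<noteq> 0 \<Longrightarrow> poly (of_int_poly q) x = 0 \<Longrightarrow> degree p \<le> degree q"
proof -
  obtain P where P: "lead_coeff P = 1" "poly (of_int_poly P) x = 0"
    using assms unfolding algebraic_int_def by blast
  define S where "S = {q :: int poly. q \<noteq> 0 \<and> poly (of_int_poly q) x = 0}"
  have "P \<in> S" using P unfolding S_def by auto
  then obtain m where "m \<in> S" and m_least: "\<And>q. q \<in> S \<Longrightarrow> degree m \<le> degree q"
    using ex_has_least_nat[of "\<lambda>q. q \<in> S" P degree] by blast
  define m' where "m' = primitive_part m"
  have "m \<noteq> 0" and m_root: "poly (of_int_poly m) x = 0" using \<open>m \<in> S\<close> unfolding S_def by auto
  have "poly (of_int_poly m) x = of_int (content m) * poly (of_int_poly m') x"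
    by (metis m'_def content_times_primitive_part of_int_hom.map_poly_hom_smult poly_smult)
  then have m'_root: "poly (of_int_poly m') x = 0" using m_root \<open>m \<noteq> 0\<close> by simp
  have m'_least: "degree m' \<le> degree q" if "q \<noteq> 0" "poly (of_int_poly q) x = 0" for q
    using m_least[of q] that unfolding m'_def S_def by simp
  \<comment> \<open>Gauss's lemma: the primitive m' divides the monic P, so its leading coefficient is a unit.\<close>
  have "m' dvd P"
    using \<open>m \<noteq> 0\<close> m'_root P(2) m'_least
    by (intro primitive_least_degree_root_dvd) (simp_all add: m'_def)
  then obtain k where "P = m' * k" by blast
  then have "lead_coeff m' * lead_coeff k = 1" using P(1) by (simp add: lead_coeff_mult)
  then have unit: "lead_coeff m' * lead_coeff m' = 1" by (auto simp: zmult_eq_1_iff)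
  show thesis
  proof
    have "m' \<noteq> 0" using \<open>m \<noteq> 0\<close> by (simp add: m'_def)
    then show "lead_coeff (smult (lead_coeff m') m') = 1" using unit by simp
    show "poly (of_int_poly (smult (lead_coeff m') m')) x = 0"
      using m'_root by (simp add: of_int_hom.map_poly_hom_smult)
    show "degree (smult (lead_coeff m') m') \<le> degree q"
      if "q \<noteq> 0" "poly (of_int_poly q) x = 0" for q
      using m'_least[OF that] by simp
  qed
qed

lemma least_degree_monic_root_unique:
  fixes p q :: "int poly" and x :: complex
  assumes "lead_coeff p = 1" "poly (of_int_poly p) x = 0"
    and "lead_coeff q = 1" "poly (of_int_poly q) x = 0"
    and p_least: "\<And>r. r \<noteq> 0 \<Longrightarrow> poly (of_int_poly r) x = 0 \<Longrightarrow> degree p \<le> degree r"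
    and q_least: "\<And>r. r \<noteq> 0 \<Longrightarrow> poly (of_int_poly r) x = 0 \<Longrightarrow> degree q \<le> degree r"
  shows "p = q"
proof (rule ccontr)
  assume "p \<noteq> q"
  have "p \<noteq> 0" "q \<noteq> 0" using assms(1,3) by auto
  then have deg: "degree p = degree q"
    using p_least[OF \<open>q \<noteq> 0\<close> assms(4)] q_least[OF \<open>p \<noteq> 0\<close> assms(2)] by simp
  have "degree (p - q) < degree p"
  proof (rule degree_lessI)
    show "p - q \<noteq> 0 \<or> 0 < degree p" using \<open>p \<noteq> q\<close> by simp
    show "\<forall>k\<ge>degree p. coeff (p - q) k = 0"
    proof (intro allI impI)
      fix k assume "degree p \<le> k"
      then consider "k = degree p" | "degree p < k" by linarith
      then show "coeff (p - q) k = 0"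
        by cases (use assms(1,3) deg in \<open>simp_all add: coeff_eq_0\<close>)
    qed
  qed
  moreover have "poly (of_int_poly (p - q)) x = 0"
    using assms(2,4) by (simp add: of_int_poly_hom.hom_minus)
  ultimately show False using p_least[of "p - q"] \<open>p \<noteq> q\<close> by simp
qed

lemma min_int_poly_root:
  assumes "algebraic_int x"
  shows "poly (of_int_poly (min_int_poly x)) x = 0"
proof -
  obtain p where p: "lead_coeff p = 1" "poly (of_int_poly p) x = 0"
    "\<And>q. q \<noteq> 0 \<Longrightarrow> poly (of_int_poly q) x = 0 \<Longrightarrow> degree p \<le> degree q"
    using algebraic_int_least_degree_monic_root[OF assms] by blast
  have "min_int_poly x = p"
    unfolding min_int_poly_def
  proof (rule the_equality)
    fix p' assume "lead_coeff p' = 1 \<and> poly (of_int_poly p') x = 0 \<and>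
      (\<forall>q. q \<noteq> 0 \<longrightarrow> poly (of_int_poly q) x = 0 \<longrightarrow> degree p' \<le> degree q)"
    with p show "p' = p" by (intro least_degree_monic_root_unique[of p' x p]) blast+
  qed (use p in blast)
  with p show ?thesis by simp
qed

lemma (in comm_ring_hom) poly_of_int_poly_hom: "hom (poly (of_int_poly Q) x) = poly (of_int_poly Q) (hom x)"
  by (induction Q) (simp_all add: of_int_poly_hom.map_poly_pCons_hom hom_distribs)

definition eval2 :: "'a :: comm_ring_1 \<Rightarrow> 'a \<Rightarrow> int poly poly \<Rightarrow> 'a" where
  "eval2 y w P = poly (map_poly (\<lambda>p. poly (of_int_poly p) y) P) w"

abbreviation varY :: "int poly poly" where "varY \<equiv> [:[:0, 1:]:]"
abbreviation varW :: "int poly poly" where "varW \<equiv> [:0, 1:]"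

lemma comm_ring_hom_poly_of_int_poly: "comm_ring_hom (\<lambda>p. poly (of_int_poly p) y)"
  by unfold_locales (simp_all add: hom_distribs)

interpretation eval2: comm_ring_hom "eval2 y w" for y w
proof -
  interpret h: map_poly_comm_ring_hom "\<lambda>p. poly (of_int_poly p) y"
    by (simp add: map_poly_comm_ring_hom_def comm_ring_hom_poly_of_int_poly)
  show "comm_ring_hom (eval2 y w)"
    by unfold_locales (simp_all add: eval2_def h.hom_add h.hom_mult)
qed

lemma eval2_pCons [simp]: "eval2 y w (pCons a P) = poly (of_int_poly a) y + w * eval2 y w P"
  by (cases "a = 0 \<and> P = 0") (auto simp: eval2_def map_poly_pCons)

section \<open>Reduction modulo X^c - 1\<close>

lemma root_of_unity_power: "(y :: 'a :: comm_monoid_mult) ^ c = 1 \<Longrightarrow> (y ^ i) ^ c = 1"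
  by (metis power_mult mult.commute power_one)

lemma primitive_root_inj_on:
  assumes "primitive_root c z"
  shows "inj_on (\<lambda>i. z ^ i) {..<c}"
proof -
  have "z ^ i \<noteq> z ^ j" if "i < j" "j < c" for i j
  proof
    assume "z ^ i = z ^ j"
    moreover have "z \<noteq> 0" using assms that unfolding primitive_root_def by (auto simp: power_0_left)
    moreover have "z ^ j = z ^ i * z ^ (j - i)"
      using \<open>i < j\<close> by (simp flip: power_add)
    ultimately have "z ^ (j - i) = 1" by simp
    moreover have "j - i \<in> {1..<c}" using that by auto
    ultimately show False using assms unfolding primitive_root_def by blast
  qed
  then show ?thesis
    by (intro inj_onI) (metis lessThan_iff linorder_neqE_nat)
qed

lemma poly_eq_0_if_vanishes_at_powers_of_primitive_root:
  fixes p :: "complex poly"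
  assumes "primitive_root c z" "degree p < c" "\<And>i. i < c \<Longrightarrow> poly p (z ^ i) = 0"
  shows "p = 0"
proof (rule poly_eqI_degree[of "(\<lambda>i. z ^ i) ` {..<c}"])
  have "card ((\<lambda>i. z ^ i) ` {..<c}) = c"
    using card_image[OF primitive_root_inj_on[OF assms(1)]] by simp
  then show "degree p < card ((\<lambda>i. z ^ i) ` {..<c})"
    "degree (0 :: complex poly) < card ((\<lambda>i. z ^ i) ` {..<c})"
    using assms(2) by auto
qed (use assms(3) in auto)

lemma division_by_X_pow_minus_1:
  fixes p :: "'a :: idom poly"
  assumes "c > 0"
  obtains q r where "p = (monom 1 c - 1) * q + r" "degree r < c"
proof -
  have eq: "monom 1 c - 1 = monom (1 :: 'a) c + [:-1:]" by (simp add: one_pCons)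
  have deg: "degree (monom (1 :: 'a) c - 1) = c"
    unfolding eq using assms by (subst degree_add_eq_left) (simp_all add: degree_monom_eq)
  have lead: "lead_coeff (monom (1 :: 'a) c - 1) = 1"
    unfolding deg using assms by simp
  then have "monom (1 :: 'a) c - 1 \<noteq> 0" by (metis coeff_0 zero_neq_one)
  obtain q r where "pseudo_divmod p (monom 1 c - 1) = (q, r)" by fastforce
  from pseudo_divmod[OF \<open>monom 1 c - 1 \<noteq> 0\<close> this] deg lead assms
  show thesis by (intro that[of q r]) auto
qed

lemma poly_X_pow_minus_1 [simp]: "poly (of_int_poly (monom 1 c - 1)) (x :: 'a :: comm_ring_1) = x ^ c - 1"
  by (simp add: of_int_poly_hom.hom_minus poly_monom)

lemma int_poly_vanishes_at_roots_of_unity: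
  fixes f :: "int poly" and l :: "'a :: comm_ring_1"
  assumes "c > 0" "primitive_root c z"
    and f_zero: "\<And>i. i < c \<Longrightarrow> poly (of_int_poly f) (z ^ i) = 0" and "l ^ c = 1"
  shows "poly (of_int_poly f) l = 0"
proof -
  obtain q r where div: "f = (monom 1 c - 1) * q + r" and "degree r < c"
    using division_by_X_pow_minus_1[OF \<open>c > 0\<close>] .
  have "z ^ c = 1" using assms(2) unfolding primitive_root_def by simp
  have "poly (of_int_poly r) (z ^ i) = 0" if "i < c" for i
  proof -
    from f_zero[OF that] root_of_unity_power[OF \<open>z ^ c = 1\<close>] show ?thesis
      by (simp add: div of_int_poly_hom.hom_add of_int_poly_hom.hom_mult)
  qed
  then have "of_int_poly r = (0 :: complex poly)"
    using \<open>degree r < c\<close> by (intro poly_eq_0_if_vanishes_at_powers_of_primitive_root[OF assms(2)]) simp_all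
  then have "r = 0" by simp
  then show ?thesis
    using \<open>l ^ c = 1\<close> by (simp add: div of_int_poly_hom.hom_mult)
qed

lemma eval2_X_pow_minus_1 [simp]: "eval2 y w (monom 1 c - 1) = w ^ c - 1"
  by (simp add: monom_altdef eval2.hom_minus eval2.hom_power)

lemma eval2_mod_X_pow_minus_1:
  assumes "w ^ c = 1"
  shows "eval2 y w ((monom 1 c - 1) * q + r) = eval2 y w r"
  using assms by (simp add: eval2.hom_add eval2.hom_mult)

lemma eval2_vanishes_at_roots_of_unity:
  fixes P :: "int poly poly" and l m :: "'a :: comm_ring_1"
  assumes "c > 0" "primitive_root c z"
    and P_zero: "\<And>i j. i < c \<Longrightarrow> j < c \<Longrightarrow> eval2 (z ^ i) (z ^ j) P = 0"
    and "l ^ c = 1" "m ^ c = 1"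
  shows "eval2 l m P = 0"
proof -
  obtain q r where div: "P = (monom 1 c - 1) * q + r" and "degree r < c"
    using division_by_X_pow_minus_1[OF \<open>c > 0\<close>] .
  have "z ^ c = 1" using assms(2) unfolding primitive_root_def by simp
  have "poly (of_int_poly (coeff r k)) l = 0" for k
  proof (rule int_poly_vanishes_at_roots_of_unity[OF assms(1,2) _ \<open>l ^ c = 1\<close>])
    fix i assume "i < c"
    have "map_poly (\<lambda>p. poly (of_int_poly p) (z ^ i)) r = 0"
    proof (rule poly_eq_0_if_vanishes_at_powers_of_primitive_root[OF assms(2)])
      show "degree (map_poly (\<lambda>p. poly (of_int_poly p) (z ^ i)) r) < c"
        using \<open>degree r < c\<close> degree_map_poly_le le_less_trans by blast
      fix j assume "j < c"
      have "eval2 (z ^ i) (z ^ j) r = 0"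
        using P_zero[OF \<open>i < c\<close> \<open>j < c\<close>] root_of_unity_power[OF \<open>z ^ c = 1\<close>]
        by (simp add: div eval2_mod_X_pow_minus_1)
      then show "poly (map_poly (\<lambda>p. poly (of_int_poly p) (z ^ i)) r) (z ^ j) = 0"
        unfolding eval2_def .
    qed
    then show "poly (of_int_poly (coeff r k)) (z ^ i) = 0"
      by (metis coeff_map_poly coeff_0 poly_0 of_int_poly_hom.hom_zero)
  qed
  then have "map_poly (\<lambda>p. poly (of_int_poly p) l) r = 0"
    by (intro poly_eqI) (simp add: coeff_map_poly)
  then have "eval2 l m r = 0" unfolding eval2_def by simp
  then show ?thesis
    using \<open>m ^ c = 1\<close> by (simp add: div eval2_mod_X_pow_minus_1)
qed

section \<open>Eigenvalues of integer matrices\<close>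

text \<open>The eigenvalues of integer matrices with a common eigenvector form a subring of the algebraic
  integers. For a suitable common eigenvector it contains two given c-th roots of unity, hence
  every integer polynomial expression in them.\<close>

definition int_eigenvalues :: "nat \<Rightarrow> complex vec \<Rightarrow> complex set" where
  "int_eigenvalues n v = {x. \<exists>A \<in> carrier_mat n n. of_int_hom.mat_hom A *\<^sub>v v = x \<cdot>\<^sub>v v}"

lemma map_mat_of_int_add: "A \<in> carrier_mat n m \<Longrightarrow> B \<in> carrier_mat n m \<Longrightarrow>
  map_mat (of_int :: int \<Rightarrow> 'a :: ring_1) (A + B) = map_mat of_int A + map_mat of_int B"
  by (rule eq_matI) auto

lemma mult_scaled_selection_mat_vec:
  assumes "v \<in> carrier_vec n" "\<And>i. i < n \<Longrightarrow> t i < n"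
  shows "of_int_hom.mat_hom (mat n n (\<lambda>(i, j). of_bool (j = t i) * k)) *\<^sub>v v
    = vec n (\<lambda>i. of_int k * v $ t i)"
proof (rule eq_vecI)
  fix i assume "i < dim_vec (vec n (\<lambda>i. of_int k * v $ t i))"
  then have "i < n" by simp
  then have "{0..<n} \<inter> {j. j = t i} = {t i}" using assms(2) by auto
  with \<open>i < n\<close> assms(1) show "(of_int_hom.mat_hom (mat n n (\<lambda>(i, j). of_bool (j = t i) * k)) *\<^sub>v v) $ i
    = vec n (\<lambda>i. of_int k * v $ t i) $ i"
    by (simp add: scalar_prod_def mult.assoc)
qed simp

lemma of_int_in_int_eigenvalues:
  assumes "v \<in> carrier_vec n"
  shows "of_int k \<in> int_eigenvalues n v"
  using mult_scaled_selection_mat_vec[OF assms, of id k] assms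
  unfolding int_eigenvalues_def by (intro CollectI bexI[of _ "mat n n (\<lambda>(i, j). of_bool (j = id i) * k)"]) auto

lemma add_in_int_eigenvalues:
  assumes "v \<in> carrier_vec n" "x \<in> int_eigenvalues n v" "y \<in> int_eigenvalues n v"
  shows "x + y \<in> int_eigenvalues n v"
proof -
  obtain A B where "A \<in> carrier_mat n n" "B \<in> carrier_mat n n"
    and "of_int_hom.mat_hom A *\<^sub>v v = x \<cdot>\<^sub>v v" "of_int_hom.mat_hom B *\<^sub>v v = y \<cdot>\<^sub>v v"
    using assms(2,3) unfolding int_eigenvalues_def by blast
  with assms(1) show ?thesis
    unfolding int_eigenvalues_def
    by (intro CollectI bexI[of _ "A + B"])
      (auto simp: map_mat_of_int_add add_mult_distrib_mat_vec add_smult_distrib_vec)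
qed

lemma mult_in_int_eigenvalues:
  assumes "v \<in> carrier_vec n" "x \<in> int_eigenvalues n v" "y \<in> int_eigenvalues n v"
  shows "x * y \<in> int_eigenvalues n v"
proof -
  obtain A B where "A \<in> carrier_mat n n" "B \<in> carrier_mat n n"
    and "of_int_hom.mat_hom A *\<^sub>v v = x \<cdot>\<^sub>v v" "of_int_hom.mat_hom B *\<^sub>v v = y \<cdot>\<^sub>v v"
    using assms(2,3) unfolding int_eigenvalues_def by blast
  with assms(1) show ?thesis
    unfolding int_eigenvalues_def
    by (intro CollectI bexI[of _ "A * B"])
      (simp_all add: of_int_hom.mat_hom_mult assoc_mult_mat_vec[of _ n n _ n] mult_mat_vec[of _ n n]
        smult_smult_assoc mult.commute)
qed

lemma algebraic_int_if_in_int_eigenvalues: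
  assumes "v \<in> carrier_vec n" "v \<noteq> 0\<^sub>v n" "x \<in> int_eigenvalues n v"
  shows "algebraic_int x"
proof -
  obtain A where A: "A \<in> carrier_mat n n" "of_int_hom.mat_hom A *\<^sub>v v = x \<cdot>\<^sub>v v"
    using assms(3) unfolding int_eigenvalues_def by blast
  then have "eigenvalue (of_int_hom.mat_hom A) x"
    using assms(1,2) unfolding eigenvalue_def eigenvector_def by auto
  then have "poly (char_poly (of_int_hom.mat_hom A)) x = 0"
    using eigenvalue_root_char_poly[of "of_int_hom.mat_hom A" n] A(1) by auto
  then have "poly (of_int_poly (char_poly A)) x = 0"
    by (simp add: of_int_hom.char_poly_hom[OF A(1)])
  moreover have "lead_coeff (char_poly A) = 1"
    using degree_monic_char_poly[OF A(1)] by simp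
  ultimately show ?thesis unfolding algebraic_int_def by blast
qed

lemma eval2_in_subring:
  assumes of_int: "\<And>k. of_int k \<in> S"
    and add: "\<And>a b. a \<in> S \<Longrightarrow> b \<in> S \<Longrightarrow> a + b \<in> S"
    and mult: "\<And>a b. a \<in> S \<Longrightarrow> b \<in> S \<Longrightarrow> a * b \<in> S"
    and "y \<in> S" "w \<in> S"
  shows "eval2 y w P \<in> S"
proof -
  have coeff_in: "poly (of_int_poly p) y \<in> S" for p
    using of_int[of 0]
    by (induction p) (simp_all add: of_int_poly_hom.map_poly_pCons_hom of_int add mult \<open>y \<in> S\<close>)
  show ?thesis
    using of_int[of 0] by (induction P) (simp_all add: coeff_in add mult \<open>w \<in> S\<close>)
qed

lemma power_mod_eq:
  assumes "(u :: 'a :: monoid_mult) ^ c = 1"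
  shows "u ^ (n mod c) = u ^ n"
proof -
  have "u ^ n = (u ^ c) ^ (n div c) * u ^ (n mod c)"
    by (simp flip: power_mult power_add)
  with assms show ?thesis by simp
qed

lemma monomial_in_int_eigenvalues:
  fixes u v :: complex
  assumes "c > 0" "u ^ c = 1" "v ^ c = 1"
  shows "u ^ a * v ^ b \<in> int_eigenvalues (c * c) (vec (c * c) (\<lambda>k. u ^ (k div c) * v ^ (k mod c)))"
    (is "_ \<in> int_eigenvalues _ ?w")
proof -
  \<comment> \<open>?w is indexed by exponent pairs (k div c, k mod c); t shifts the pair by (a, b).\<close>
  define t where "t k = ((k div c + a) mod c) * c + (k mod c + b) mod c" for k
  have t_less: "t k < c * c" for k
  proof -
    have "((k div c + a) mod c) * c + (k mod c + b) mod c < ((k div c + a) mod c) * c + c"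
      using \<open>c > 0\<close> by simp
    also have "\<dots> \<le> c * c"
      using mult_le_mono1[OF Suc_leI[OF mod_less_divisor[OF \<open>c > 0\<close>]], of "k div c + a" c] by simp
    finally show ?thesis unfolding t_def .
  qed
  have shift: "?w $ t k = u ^ a * v ^ b * ?w $ k" if "k < c * c" for k
  proof -
    have "t k div c = (k div c + a) mod c" "t k mod c = (k mod c + b) mod c"
      using \<open>c > 0\<close> unfolding t_def by simp_all
    then have "?w $ t k = u ^ ((k div c + a) mod c) * v ^ ((k mod c + b) mod c)"
      using t_less by simp
    also have "\<dots> = u ^ (k div c + a) * v ^ (k mod c + b)"
      by (simp only: power_mod_eq[OF assms(2)] power_mod_eq[OF assms(3)])
    finally show ?thesis using that by (simp add: power_add)
  qed
  define M :: "int mat" where "M = mat (c * c) (c * c) (\<lambda>(i, j). of_bool (j = t i) * 1)"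
  have "of_int_hom.mat_hom M *\<^sub>v ?w = vec (c * c) (\<lambda>i. of_int 1 * ?w $ t i)"
    unfolding M_def by (rule mult_scaled_selection_mat_vec) (simp_all add: t_less)
  also have "\<dots> = (u ^ a * v ^ b) \<cdot>\<^sub>v ?w"
    by (rule eq_vecI) (simp_all add: shift)
  finally show ?thesis unfolding int_eigenvalues_def M_def by auto
qed

lemma algebraic_int_eval2_roots_of_unity:
  fixes u v :: complex
  assumes "c > 0" "u ^ c = 1" "v ^ c = 1"
  shows "algebraic_int (eval2 u v P)"
proof -
  define w where "w = vec (c * c) (\<lambda>k. u ^ (k div c) * v ^ (k mod c))"
  have "w \<in> carrier_vec (c * c)" unfolding w_def by simp
  moreover have "w \<noteq> 0\<^sub>v (c * c)"
  proof
    assume "w = 0\<^sub>v (c * c)"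
    then have "vec_index w 0 = 0" using \<open>c > 0\<close> by simp
    then show False using \<open>c > 0\<close> unfolding w_def by simp
  qed
  moreover have "eval2 u v P \<in> int_eigenvalues (c * c) w"
    using monomial_in_int_eigenvalues[OF assms, of 1 0] monomial_in_int_eigenvalues[OF assms, of 0 1]
    by (intro eval2_in_subring of_int_in_int_eigenvalues add_in_int_eigenvalues mult_in_int_eigenvalues
        \<open>w \<in> carrier_vec (c * c)\<close>) (simp_all add: w_def)
  ultimately show ?thesis by (rule algebraic_int_if_in_int_eigenvalues)
qed

lemma power_pred_eq_inverse:
  assumes "c > 0" "(y :: 'a :: field) ^ c = 1"
  shows "y ^ (c - 1) = inverse y"
proof -
  have "y * y ^ (c - 1) = 1" using assms by (simp flip: power_Suc)
  then show ?thesis by (rule inverse_unique[symmetric])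
qed

lemma Lcm_min_int_poly_vanishes_at_eval2:
  fixes L :: "int poly poly" and l m :: "'a :: comm_ring_1"
  assumes "c > 0" "primitive_root c z" "l ^ c = 1" "m ^ c = 1"
  defines "Q \<equiv> Lcm ((\<lambda>(i, j). min_int_poly (eval2 (z ^ i) (z ^ j) L)) ` ({0..<c} \<times> {0..<c}))"
  shows "poly (of_int_poly Q) (eval2 l m L) = 0"
proof -
  have "z ^ c = 1" using assms(2) by (simp add: primitive_root_def)
  have "eval2 l m (poly (of_int_poly Q) L) = 0"
  proof (rule eval2_vanishes_at_roots_of_unity[OF assms(1,2) _ assms(3,4)])
    fix i j assume "i < c" "j < c"
    define x where "x = eval2 (z ^ i) (z ^ j) L"
    have "algebraic_int x" unfolding x_def
      using \<open>z ^ c = 1\<close> by (intro algebraic_int_eval2_roots_of_unity[OF assms(1)] root_of_unity_power)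
    then have "poly (of_int_poly (min_int_poly x)) x = 0" by (rule min_int_poly_root)
    moreover have "min_int_poly x dvd Q"
      unfolding Q_def x_def using \<open>i < c\<close> \<open>j < c\<close> by (intro dvd_Lcm) auto
    ultimately have "poly (of_int_poly Q) x = 0"
      by (auto elim!: dvdE simp: of_int_poly_hom.hom_mult)
    then show "eval2 (z ^ i) (z ^ j) (poly (of_int_poly Q) L) = 0"
      by (simp add: eval2.poly_of_int_poly_hom x_def)
  qed
  then show ?thesis by (simp add: eval2.poly_of_int_poly_hom)
qed

definition theta_form :: "nat \<Rightarrow> int poly poly" where
  "theta_form c = varY + varY ^ (c - 1) + varW + varW ^ (c - 1)"

definition delta_form :: "nat \<Rightarrow> int poly poly" where
  "delta_form c = (varY + varY ^ (c - 1)) * (varW + varW ^ (c - 1)) + 2"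

lemma eval2_theta_form:
  assumes "c > 0" "(y :: 'a :: field) ^ c = 1" "w ^ c = 1"
  shows "eval2 y w (theta_form c) = y + inverse y + w + inverse w"
  using power_pred_eq_inverse[OF assms(1,2)] power_pred_eq_inverse[OF assms(1,3)]
  by (simp add: theta_form_def eval2.hom_add eval2.hom_power)

lemma eval2_delta_form:
  assumes "c > 0" "(y :: 'a :: field) ^ c = 1" "w ^ c = 1"
  shows "eval2 y w (delta_form c) = (y + inverse y) * (w + inverse w) + 2"
  using power_pred_eq_inverse[OF assms(1,2)] power_pred_eq_inverse[OF assms(1,3)]
  by (simp add: delta_form_def eval2.hom_add eval2.hom_mult eval2.hom_power eval2.hom_numeral)

lemma Theta_vanishes_at_roots_of_unity:
  fixes l m :: "'a :: field"
  assumes "c > 0" "primitive_root c z" "l ^ c = 1" "m ^ c = 1"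
  shows "poly (of_int_poly (Theta c z)) (l + inverse l + m + inverse m) = 0"
proof -
  have "z ^ c = 1" using assms(2) by (simp add: primitive_root_def)
  then have "Theta c z =
      Lcm ((\<lambda>(i, j). min_int_poly (eval2 (z ^ i) (z ^ j) (theta_form c))) ` ({0..<c} \<times> {0..<c}))"
    unfolding Theta_def using assms(1)
    by (intro arg_cong[where f = Lcm] image_cong refl) (auto simp: eval2_theta_form root_of_unity_power)
  then have "poly (of_int_poly (Theta c z)) (eval2 l m (theta_form c)) = 0"
    using Lcm_min_int_poly_vanishes_at_eval2[OF assms] by simp
  then show ?thesis by (simp add: eval2_theta_form[OF assms(1,3,4)])
qed

lemma Delta_vanishes_at_roots_of_unity:
  fixes l m :: "'a :: field"
  assumes "c > 0" "primitive_root c z" "l ^ c = 1" "m ^ c = 1"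
  shows "poly (of_int_poly (Delta c z)) ((l + inverse l) * (m + inverse m) + 2) = 0"
proof -
  have "z ^ c = 1" using assms(2) by (simp add: primitive_root_def)
  have "z ^ (i + j) + z ^ i * inverse (z ^ j) + inverse (z ^ i) * z ^ j + inverse (z ^ (i + j)) + 2
      = eval2 (z ^ i) (z ^ j) (delta_form c)" for i j
    using assms(1) \<open>z ^ c = 1\<close>
    by (simp add: eval2_delta_form root_of_unity_power power_add algebra_simps)
  then have "Delta c z =
      Lcm ((\<lambda>(i, j). min_int_poly (eval2 (z ^ i) (z ^ j) (delta_form c))) ` ({0..<c} \<times> {0..<c}))"
    unfolding Delta_def by (intro arg_cong[where f = Lcm] image_cong refl) auto
  then have "poly (of_int_poly (Delta c z)) (eval2 l m (delta_form c)) = 0"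
    using Lcm_min_int_poly_vanishes_at_eval2[OF assms] by simp
  then show ?thesis by (simp add: eval2_delta_form[OF assms(1,3,4)])
qed

section \<open>The characteristic polynomial of a symplectic matrix\<close>

lemma det_expand_first_row:
  assumes "(A :: 'a :: comm_ring_1 mat) \<in> carrier_mat (Suc n) (Suc n)"
  shows "det A = (\<Sum>j<Suc n. A $$ (0, j) * ((-1) ^ j * det (mat_delete A 0 j)))"
  using laplace_expansion_row[OF assms, of 0] by (simp add: cofactor_def)

lemma det_2x2:
  assumes "(A :: 'a :: comm_ring_1 mat) \<in> carrier_mat 2 2"
  shows "det A = A $$ (0, 0) * A $$ (1, 1) - A $$ (0, 1) * A $$ (1, 0)"
proof -
  have A: "A \<in> carrier_mat (Suc 1) (Suc 1)" using assms by (simp add: numeral_2_eq_2)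
  show ?thesis
    apply (subst det_expand_first_row[OF A])
    apply (simp add: lessThan_Suc)
    apply (subst det_single, use A in \<open>simp add: mat_delete_def\<close>)+
    using A by (simp add: mat_delete_def)
qed

lemma det_3x3:
  assumes "(A :: 'a :: comm_ring_1 mat) \<in> carrier_mat 3 3"
  shows "det A = A $$ (0, 0) * (A $$ (1, 1) * A $$ (2, 2) - A $$ (1, 2) * A $$ (2, 1))
    - A $$ (0, 1) * (A $$ (1, 0) * A $$ (2, 2) - A $$ (1, 2) * A $$ (2, 0))
    + A $$ (0, 2) * (A $$ (1, 0) * A $$ (2, 1) - A $$ (1, 1) * A $$ (2, 0))"
proof -
  have A: "A \<in> carrier_mat (Suc 2) (Suc 2)" using assms by simp
  show ?thesis
    apply (subst det_expand_first_row[OF A])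
    apply (simp add: lessThan_Suc)
    apply (subst det_2x2, use A in \<open>simp add: mat_delete_def\<close>)+
    using A by (simp add: mat_delete_def numeral_eq_Suc algebra_simps)
qed

lemma det_4x4:
  assumes "(A :: 'a :: comm_ring_1 mat) \<in> carrier_mat 4 4"
  shows "det A =
    A $$ (0, 0) * (A $$ (1, 1) * (A $$ (2, 2) * A $$ (3, 3) - A $$ (2, 3) * A $$ (3, 2))
        - A $$ (1, 2) * (A $$ (2, 1) * A $$ (3, 3) - A $$ (2, 3) * A $$ (3, 1))
        + A $$ (1, 3) * (A $$ (2, 1) * A $$ (3, 2) - A $$ (2, 2) * A $$ (3, 1)))
     - A $$ (0, 1) * (A $$ (1, 0) * (A $$ (2, 2) * A $$ (3, 3) - A $$ (2, 3) * A $$ (3, 2))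
        - A $$ (1, 2) * (A $$ (2, 0) * A $$ (3, 3) - A $$ (2, 3) * A $$ (3, 0))
        + A $$ (1, 3) * (A $$ (2, 0) * A $$ (3, 2) - A $$ (2, 2) * A $$ (3, 0)))
     + A $$ (0, 2) * (A $$ (1, 0) * (A $$ (2, 1) * A $$ (3, 3) - A $$ (2, 3) * A $$ (3, 1))
        - A $$ (1, 1) * (A $$ (2, 0) * A $$ (3, 3) - A $$ (2, 3) * A $$ (3, 0))
        + A $$ (1, 3) * (A $$ (2, 0) * A $$ (3, 1) - A $$ (2, 1) * A $$ (3, 0)))
     - A $$ (0, 3) * (A $$ (1, 0) * (A $$ (2, 1) * A $$ (3, 2) - A $$ (2, 2) * A $$ (3, 1))
        - A $$ (1, 1) * (A $$ (2, 0) * A $$ (3, 2) - A $$ (2, 2) * A $$ (3, 0))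
        + A $$ (1, 2) * (A $$ (2, 0) * A $$ (3, 1) - A $$ (2, 1) * A $$ (3, 0)))"
proof -
  have A: "A \<in> carrier_mat (Suc 3) (Suc 3)" using assms by simp
  show ?thesis
    apply (subst det_expand_first_row[OF A])
    apply (simp add: lessThan_Suc)
    apply (subst det_3x3, use A in \<open>simp add: mat_delete_def\<close>)+
    using A by (simp add: mat_delete_def numeral_eq_Suc algebra_simps)
qed

lemma J4_carrier [simp]: "J4 \<in> carrier_mat 4 4"
  and dim_row_J4 [simp]: "dim_row J4 = 4" and dim_col_J4 [simp]: "dim_col J4 = 4"
  by (simp_all add: J4_def)

lemma J4_mult_J4: "J4 * J4 = - (1\<^sub>m 4 :: 'a :: comm_ring_1 mat)"
  by (rule eq_matI) (auto simp: J4_def scalar_prod_def eval_nat_numeral)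

lemma transpose_J4_mult_index:
  assumes "(A :: 'a :: comm_ring_1 mat) \<in> carrier_mat 4 4" "k < 4" "l < 4"
  shows "(transpose_mat A * J4 * A) $$ (k, l)
    = A $$ (0, k) * A $$ (2, l) + A $$ (1, k) * A $$ (3, l) - A $$ (2, k) * A $$ (0, l) - A $$ (3, k) * A $$ (1, l)"
  using assms by (simp add: J4_def scalar_prod_def eval_nat_numeral algebra_simps)

lemma pfaffian_transpose_J4_mult:
  assumes "(A :: 'a :: comm_ring_1 mat) \<in> carrier_mat 4 4"
  defines "M \<equiv> transpose_mat A * J4 * A"
  shows "M $$ (0, 1) * M $$ (2, 3) - M $$ (0, 2) * M $$ (1, 3) + M $$ (0, 3) * M $$ (1, 2) = - det A"
  unfolding M_def
  by (subst transpose_J4_mult_index[OF assms(1)], simp, simp)+ (simp add: det_4x4[OF assms(1)] algebra_simps)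

lemma Sp4_det:
  assumes "g \<in> Sp4"
  shows "det g = 1"
proof -
  have g: "g \<in> carrier_mat 4 4" and symp: "transpose_mat g * J4 * g = J4" using assms by (auto simp: Sp4_def)
  from pfaffian_transpose_J4_mult[OF g, unfolded symp] show ?thesis by (simp add: J4_def)
qed

lemma det_uminus:
  assumes "(A :: 'a :: comm_ring_1 mat) \<in> carrier_mat n n"
  shows "det (- A) = (-1) ^ n * det A"
proof -
  have "- A = (-1) \<cdot>\<^sub>m A" using assms by (intro eq_matI) auto
  with assms show ?thesis by simp
qed

lemma Sp4_left_inverse:
  assumes "g \<in> Sp4"
  shows "- (J4 * transpose_mat g * J4) * g = 1\<^sub>m 4"
proof -
  have g: "g \<in> carrier_mat 4 4" and symp: "transpose_mat g * J4 * g = J4" using assms by (auto simp: Sp4_def)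
  have "J4 * transpose_mat g * J4 * g = J4 * (transpose_mat g * J4 * g)"
    using g by (simp add: assoc_mult_mat[of _ 4 4 _ 4 _ 4])
  with g show ?thesis by (simp add: symp J4_mult_J4 uminus_mult_left_mat[of _ g])
qed

lemma Sp4_similar_transpose:
  assumes "g \<in> Sp4"
  shows "similar_mat (- (J4 * transpose_mat g * J4)) (transpose_mat g)"
proof -
  have g: "g \<in> carrier_mat 4 4" using assms by (simp add: Sp4_def)
  have "- J4 * J4 = (1\<^sub>m 4 :: 'a mat)" "J4 * - J4 = (1\<^sub>m 4 :: 'a mat)"
    by (simp_all add: uminus_mult_left_mat J4_mult_J4 uminus_mult_right_mat)
  moreover have "- (J4 * transpose_mat g * J4) = - J4 * transpose_mat g * J4"
    using g by (simp add: uminus_mult_left_mat)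
  ultimately show ?thesis
    unfolding similar_mat_def similar_mat_wit_def using g by (intro exI[of _ "- J4"] exI[of _ J4]) (auto simp: Let_def)
qed

lemma poly_char_poly_4x4:
  assumes "(A :: 'a :: field mat) \<in> carrier_mat 4 4"
  shows "poly (char_poly A) x = det (char_matrix A x)"
  using assms by (simp add: char_poly_matrix[OF assms] det_uminus[OF char_matrix_closed[OF assms]])

lemma Sp4_mult_char_matrix_inverse:
  fixes g :: "'a :: field mat"
  assumes "g \<in> Sp4" "T \<noteq> 0"
  defines "h \<equiv> - (J4 * transpose_mat g * J4)"
  shows "g * char_matrix h (inverse T) = (- inverse T) \<cdot>\<^sub>m char_matrix g T"
proof -
  have g: "g \<in> carrier_mat 4 4" using assms(1) by (simp add: Sp4_def)
  have h: "h \<in> carrier_mat 4 4" unfolding h_def using g by (auto intro!: mult_carrier_mat[of _ 4 4])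
  have "h * g = 1\<^sub>m 4" unfolding h_def by (rule Sp4_left_inverse[OF assms(1)])
  then have "g * h = 1\<^sub>m 4" by (rule mat_mult_left_right_inverse[OF h g])
  moreover have "g * char_matrix h (inverse T) = g * h + (- inverse T) \<cdot>\<^sub>m (g * 1\<^sub>m 4)"
    unfolding char_matrix_def using g h
    by (simp only: mult_add_distrib_mat[of g 4 4] mult_smult_distrib[OF g one_carrier_mat] one_carrier_mat
        smult_carrier_mat carrier_matD)
  moreover have "(- inverse T) \<cdot>\<^sub>m ((- T) \<cdot>\<^sub>m 1\<^sub>m 4) = (1\<^sub>m 4 :: 'a mat)"
    using assms(2) by (intro eq_matI) auto
  ultimately show ?thesis
    using g by (simp add: char_matrix_def add_smult_distrib_left_mat[of _ 4 4] comm_add_mat[of _ 4 4])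
qed

lemma Sp4_char_poly_palindromic:
  fixes g :: "'a :: field mat"
  assumes "g \<in> Sp4" "T \<noteq> 0"
  shows "poly (char_poly g) T = T ^ 4 * poly (char_poly g) (inverse T)"
proof -
  define h where "h = - (J4 * transpose_mat g * J4)"
  have g: "g \<in> carrier_mat 4 4" using assms(1) by (simp add: Sp4_def)
  have h: "h \<in> carrier_mat 4 4" unfolding h_def using g by (auto intro!: mult_carrier_mat[of _ 4 4])
  have "det g * det (char_matrix h (inverse T)) = (inverse T) ^ 4 * det (char_matrix g T)"
    using arg_cong[OF Sp4_mult_char_matrix_inverse[OF assms], of det] char_matrix_closed[OF g, of T]
      char_matrix_closed[OF h, of "inverse T"]
    by (simp add: h_def det_mult[OF g] carrier_matD)
  moreover have "char_poly h = char_poly g"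
    using char_poly_similar[OF Sp4_similar_transpose[OF assms(1)]] g by (simp add: h_def)
  ultimately have "poly (char_poly g) (inverse T) = (inverse T) ^ 4 * poly (char_poly g) T"
    using Sp4_det[OF assms(1)] by (metis poly_char_poly_4x4[OF g] poly_char_poly_4x4[OF h] mult_1)
  with assms(2) show ?thesis by (simp add: field_simps)
qed

lemma poly_eq_quartic:
  assumes "degree (p :: 'a :: zero poly) \<le> 4"
  shows "p = [:coeff p 0, coeff p 1, coeff p 2, coeff p 3, coeff p 4:]"
  using assms by (intro poly_eqI) (auto simp: coeff_pCons coeff_eq_0 eval_nat_numeral split: nat.split)

lemma Sp4_char_poly_eq:
  fixes g :: "'a :: field mat"
  assumes "g \<in> Sp4" "infinite (UNIV :: 'a set)"
  shows "char_poly g = [:1, - chi 3 g, chi 2 g, - chi 3 g, 1:]"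
proof -
  define p where "p = char_poly g"
  have "g \<in> carrier_mat 4 4" using assms(1) by (simp add: Sp4_def)
  then have deg: "degree p = 4" and lead: "coeff p 4 = 1"
    using degree_monic_char_poly unfolding p_def by blast+
  have "reflect_poly p = p"
  proof (rule ccontr)
    assume "reflect_poly p \<noteq> p"
    then have "finite {x. poly (reflect_poly p - p) x = 0}" by (intro poly_roots_finite) simp
    moreover have "poly (reflect_poly p) x = poly p x" if "x \<noteq> 0" for x
      using Sp4_char_poly_palindromic[OF assms(1) that] poly_reflect_poly_nz[OF that, of p] deg
      by (simp add: p_def)
    then have "UNIV - {0} \<subseteq> {x. poly (reflect_poly p - p) x = 0}" by auto
    ultimately have "finite (UNIV - {0 :: 'a})" by (rule finite_subset[rotated])
    with assms(2) show False by simp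
  qed
  then have sym: "coeff p n = coeff p (4 - n)" if "n \<le> 4" for n
    using coeff_reflect_poly[of p n] deg that by simp
  have "p = [:coeff p 0, coeff p 1, coeff p 2, coeff p 3, coeff p 4:]"
    using deg by (intro poly_eq_quartic) simp
  also have "\<dots> = [:1, - chi 3 g, chi 2 g, - chi 3 g, 1:]"
    using lead sym[of 0] sym[of 1] by (simp add: chi_def p_def)
  finally show ?thesis unfolding p_def .
qed

lemma infinite_UNIV_alg_closed: "infinite (UNIV :: 'a :: alg_closed_field set)"
proof
  assume fin: "finite (UNIV :: 'a set)"
  define q :: "'a poly" where "q = (\<Prod>a\<in>UNIV. [:- a, 1:])"
  have "degree q = card (UNIV :: 'a set)"
    unfolding q_def by (subst degree_prod_eq_sum_degree) auto
  moreover have "card (UNIV :: 'a set) > 0" using fin by (simp add: card_gt_0_iff)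
  ultimately have "degree (1 + q) > 0" by (subst degree_add_eq_right) auto
  then obtain x where "poly (1 + q) x = 0" using alg_closed_imp_poly_has_root by blast
  moreover have "poly q x = 0"
    unfolding q_def using fin by (simp add: poly_prod prod_zero_iff)
  ultimately show False by simp
qed

lemma alg_closed_exists_add_inverse_eq: "\<exists>x :: 'a :: alg_closed_field. x \<noteq> 0 \<and> x + inverse x = u"
proof -
  obtain x :: 'a where x: "poly [:1, - u, 1:] x = 0"
    using alg_closed_imp_poly_has_root[of "[:1, - u, 1:]"] by auto
  then have "x \<noteq> 0" by auto
  moreover have "x * x + 1 = u * x" using x by (simp add: algebra_simps)
  ultimately show ?thesis by (intro exI[of _ x]) (simp add: field_simps)
qed

lemma palindromic_quartic_roots:
  fixes a b :: "'a :: alg_closed_field"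
  obtains l m where "poly [:1, - a, b, - a, 1:] l = 0" "poly [:1, - a, b, - a, 1:] m = 0"
    "a = l + inverse l + m + inverse m" "b = (l + inverse l) * (m + inverse m) + 2"
proof -
  obtain u where u: "poly [:b - 2, - a, 1:] u = 0"
    using alg_closed_imp_poly_has_root[of "[:b - 2, - a, 1:]"] by auto
  define u' where "u' = a - u"
  have b: "b = u * u' + 2" using u by (simp add: u'_def algebra_simps)
  obtain l m :: 'a where l: "l \<noteq> 0" "l + inverse l = u" and m: "m \<noteq> 0" "m + inverse m = u'"
    using alg_closed_exists_add_inverse_eq by metis
  have factor: "poly [:1, - a, b, - a, 1:] x = poly [:1, - u, 1:] x * poly [:1, - u', 1:] x" for x
    by (simp add: b u'_def algebra_simps)
  have "poly [:1, - u, 1:] l = 0" "poly [:1, - u', 1:] m = 0"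
    using l m by (simp_all add: field_simps)
  then have "poly [:1, - a, b, - a, 1:] l = 0" "poly [:1, - a, b, - a, 1:] m = 0"
    by (simp_all only: factor mult_zero_left mult_zero_right)
  moreover have "a = l + inverse l + m + inverse m" using l(2) m(2) by (simp add: u'_def add.assoc)
  moreover have "b = (l + inverse l) * (m + inverse m) + 2" using l(2) m(2) by (simp add: b)
  ultimately show thesis by (rule that)
qed

section \<open>Passing to the algebraic closure\<close>

lemma eigenvalue_root_of_unity:
  fixes A :: "'a :: field mat"
  assumes A: "A \<in> carrier_mat n n" and "A ^\<^sub>m c = 1\<^sub>m n" and "poly (char_poly A) l = 0"
  shows "l ^ c = 1"
proof -
  obtain v where v: "eigenvector A v l"
    using assms(3) eigenvalue_root_char_poly[OF A] unfolding eigenvalue_def by blast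
  then have "v \<in> carrier_vec n" "v \<noteq> 0\<^sub>v n" using A unfolding eigenvector_def by auto
  then obtain i where i: "i < n" "v $ i \<noteq> 0" by (metis eq_vecI carrier_vecD index_zero_vec)
  have "v = l ^ c \<cdot>\<^sub>v v"
    using eigenvector_pow[OF A v, of c] assms(2) \<open>v \<in> carrier_vec n\<close> by simp
  then have "v $ i = l ^ c * v $ i" using i \<open>v \<in> carrier_vec n\<close> by (metis index_smult_vec(1) carrier_vecD)
  with i show ?thesis by simp
qed

context comm_ring_hom
begin

lemma map_mat_J4 [simp]: "map_mat hom J4 = J4"
  by (rule eq_matI) (auto simp: J4_def hom_uminus)

lemma Sp4_map_mat:
  assumes "A \<in> Sp4"
  shows "map_mat hom A \<in> Sp4"
proof -
  have A: "A \<in> carrier_mat 4 4" and "transpose_mat A * J4 * A = J4" using assms by (auto simp: Sp4_def)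
  then have "map_mat hom (transpose_mat A * J4 * A) = J4" by simp
  moreover have "map_mat hom (transpose_mat A * J4 * A) = transpose_mat (map_mat hom A) * J4 * map_mat hom A"
    using A by (simp add: mat_hom_mult[of "transpose_mat A * J4" 4 4 A 4] mat_hom_mult[of "transpose_mat A" 4 4 J4 4]
        map_mat_transpose)
  ultimately show ?thesis using A by (simp add: Sp4_def)
qed

lemma chi_map_mat:
  assumes "A \<in> carrier_mat 4 4"
  shows "chi k (map_mat hom A) = hom (chi k A)"
  by (simp add: chi_def char_poly_hom[OF assms] hom_distribs)

end

interpretation to_ac_hom: inj_comm_ring_hom "to_ac :: 'a :: field \<Rightarrow> 'a alg_closure"
  by unfold_locales (simp_all add: inj_to_ac)

theorem mainTheorem13:
  fixes c :: nat and z :: complex and g :: "'a :: field mat"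
  assumes "c > 0" and "primitive_root c z"
    and "g \<in> Sp4" and "g ^\<^sub>m c = 1\<^sub>m 4"
  shows "poly (map_poly of_int (Theta c z)) (chi 3 g) = 0
       \<and> poly (map_poly of_int (Delta c z)) (chi 2 g) = 0"
proof -
  define gK where "gK = map_mat to_ac g"
  have g: "g \<in> carrier_mat 4 4" using assms(3) by (simp add: Sp4_def)
  then have gK: "gK \<in> carrier_mat 4 4" "gK \<in> Sp4" "gK ^\<^sub>m c = 1\<^sub>m 4"
    using to_ac_hom.Sp4_map_mat[OF assms(3)] assms(4)
    by (simp_all add: gK_def to_ac_hom.mat_hom_one flip: to_ac_hom.mat_hom_pow)
  have "char_poly gK = [:1, - to_ac (chi 3 g), to_ac (chi 2 g), - to_ac (chi 3 g), 1:]"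
    using Sp4_char_poly_eq[OF gK(2) infinite_UNIV_alg_closed] by (simp add: gK_def to_ac_hom.chi_map_mat[OF g])
  then obtain l m where "poly (char_poly gK) l = 0" "poly (char_poly gK) m = 0"
    and chi3: "to_ac (chi 3 g) = l + inverse l + m + inverse m"
    and chi2: "to_ac (chi 2 g) = (l + inverse l) * (m + inverse m) + 2"
    by (metis palindromic_quartic_roots)
  then have "l ^ c = 1" "m ^ c = 1" using eigenvalue_root_of_unity[OF gK(1,3)] by blast+
  then have "to_ac (poly (of_int_poly (Theta c z)) (chi 3 g)) = 0"
    and "to_ac (poly (of_int_poly (Delta c z)) (chi 2 g)) = 0"
    using Theta_vanishes_at_roots_of_unity[OF assms(1,2)] Delta_vanishes_at_roots_of_unity[OF assms(1,2)]
    by (simp_all add: to_ac_hom.poly_of_int_poly_hom chi3 chi2)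
  then show ?thesis by simp
qed

end
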